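(* Let $q>0$. (1) There exists a unique maximizer $A^*$ of $w$ over $[0,D^*]$. It satisfies $A^*\le\sqrt{\max((q-1)/2,0)}$, and for $0\le A\le D^*$ one has $w'(A)\le0$ if and only if $A\ge A^*$. (2) Moreover, $A^*=0$ if and only if $q\le1$. Here $$w(A):=\frac{1}{G_q(A)}\left[(D^* )^q\frac{(F_q+G_q)(A)}{(F_q+G_q)(D^* )}-A^q\right],\quad 0\le A\le D^*.$$
   Context: $F_q(y):=\int_0^\infty u^{q-1}e^{yu-u^2/2}\,\mathrm{d}u$ and $G_q(y):=F_q(-y)$ for $y\in\mathbb{R}$. $D^*>0$ is the unique positive root of $q-D(F_q+G_q)'(D)/(F_q+G_q)(D)=0$. *)

theory Defs
  imports "HOL-Analysis.Analysis"
begin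

definition Fq :: "real \<Rightarrow> real \<Rightarrow> real" where
  "Fq q y = (LBINT u:{0<..}. u powr (q - 1) * exp (y * u - u\<^sup>2 / 2))"

definition Gq :: "real \<Rightarrow> real \<Rightarrow> real" where
  "Gq q y = Fq q (- y)"

definition is_Dstar :: "real \<Rightarrow> real \<Rightarrow> bool" where
  "is_Dstar q D \<longleftrightarrow> D > 0 \<and>
     q - D * deriv (\<lambda>y. Fq q y + Gq q y) D / (Fq q D + Gq q D) = 0"

definition wfun :: "real \<Rightarrow> real \<Rightarrow> real \<Rightarrow> real" where
  "wfun q D A = (D powr q * (Fq q A + Gq q A) / (Fq q D + Gq q D) - A powr q) / Gq q A"

end

theory Submission
  imports Defs
begin

text \<open>
  Write \<open>w = N / G\<^sub>q\<close> with \<open>N(A) = c (F\<^sub>q + G\<^sub>q)(A) - A\<^sup>q\<close> and \<open>c = D\<^sup>q / (F\<^sub>q + G\<^sub>q)(D)\<close>.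
  Differentiating under the integral sign and integrating by parts gives \<open>F\<^sub>q' = F\<^sub>q\<^sub>+\<^sub>1\<close> and
  \<open>F\<^sub>q\<^sub>+\<^sub>2(y) = y F\<^sub>q\<^sub>+\<^sub>1(y) + q F\<^sub>q(y)\<close>, so \<open>F\<^sub>q\<close> and \<open>G\<^sub>q\<close> both solve \<open>u'' = y u' + q u\<close>.
  Hence \<open>w' = W / G\<^sub>q\<^sup>2\<close> with the Wronskian \<open>W = N' G\<^sub>q - N G\<^sub>q'\<close>, and
  \<open>(e\<^sup>-\<^sup>A\<^sup>\<^sup>2\<^sup>/\<^sup>2 W)' = q A\<^sup>q\<^sup>-\<^sup>2 (2A\<^sup>2 - (q - 1)) G\<^sub>q e\<^sup>-\<^sup>A\<^sup>\<^sup>2\<^sup>/\<^sup>2\<close>: the weighted Wronskian decreases up to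
  \<open>\<surd>((q - 1)/2)\<close> and increases afterwards. The equation defining \<open>D = D\<^sup>*\<close> says exactly
  \<open>N(D) = N'(D) = 0\<close>, so \<open>W(D) = 0\<close>; together with \<open>W(0) > 0\<close> for \<open>q > 1\<close> this makes \<open>W\<close> change
  sign exactly once on \<open>(0, D)\<close>, at some \<open>A\<^sup>* \<le> \<surd>(max((q - 1)/2, 0))\<close> that vanishes iff
  \<open>q \<le> 1\<close>. So \<open>w\<close> increases on \<open>[0, A\<^sup>*]\<close> and decreases on \<open>[A\<^sup>*, D]\<close>.
\<close>

lemma has_real_derivative_integral_dominated:
  fixes f f' :: "real \<Rightarrow> 'a \<Rightarrow> real" and h :: "'a \<Rightarrow> real"
  assumes "0 < r"
    and integrable: "\<And>y. y \<in> ball x r \<Longrightarrow> integrable M (f y)"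
    and deriv: "\<And>y u. y \<in> ball x r \<Longrightarrow> u \<in> space M \<Longrightarrow>
                  ((\<lambda>y. f y u) has_real_derivative f' y u) (at y)"
    and dominated: "\<And>y u. y \<in> ball x r \<Longrightarrow> u \<in> space M \<Longrightarrow> \<bar>f' y u\<bar> \<le> h u"
    and "integrable M h" and "f' x \<in> borel_measurable M"
  shows "((\<lambda>y. integral\<^sup>L M (f y)) has_real_derivative integral\<^sup>L M (f' x)) (at x)"
proof -
  have x: "x \<in> ball x r" using \<open>0 < r\<close> by simp
  have "((\<lambda>y. (integral\<^sup>L M (f y) - integral\<^sup>L M (f x)) / (y - x)) \<longlongrightarrow> integral\<^sup>L M (f' x))
          (at x within ball x r)"
    unfolding tendsto_at_iff_sequentially comp_def
  proof (intro allI impI)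
    fix X :: "nat \<Rightarrow> real"
    assume X: "\<forall>i. X i \<in> ball x r - {x}" and "X \<longlonglongrightarrow> x"
    define quot where "quot i u = (f (X i) u - f x u) / (X i - x)" for i u
    have "(integral\<^sup>L M (f (X i)) - integral\<^sup>L M (f x)) / (X i - x) = integral\<^sup>L M (quot i)" for i
      unfolding quot_def using integrable[of "X i"] integrable[OF x] X by simp
    moreover have "(\<lambda>i. integral\<^sup>L M (quot i)) \<longlonglongrightarrow> integral\<^sup>L M (f' x)"
    proof (rule integral_dominated_convergence[where w = h])
      show "quot i \<in> borel_measurable M" for i
        unfolding quot_def using integrable[of "X i"] integrable[OF x] X by auto
      show "AE u in M. (\<lambda>i. quot i u) \<longlonglongrightarrow> f' x u"
      proof (rule AE_I2)
        fix u assume "u \<in> space M"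
        then have "((\<lambda>y. (f y u - f x u) / (y - x)) \<longlongrightarrow> f' x u) (at x)"
          using deriv[OF x] by (simp add: has_field_derivative_iff)
        then show "(\<lambda>i. quot i u) \<longlonglongrightarrow> f' x u"
          unfolding quot_def using X \<open>X \<longlonglongrightarrow> x\<close>
          by (auto simp: tendsto_at_iff_sequentially comp_def)
      qed
      show "AE u in M. norm (quot i u) \<le> h u" for i
      proof (rule AE_I2)
        fix u assume u: "u \<in> space M"
        have "norm (f (X i) u - f x u) \<le> h u * norm (X i - x)"
          by (rule field_differentiable_bound[of "ball x r" "\<lambda>y. f y u" "\<lambda>y. f' y u"])
             (use X x u deriv dominated in \<open>auto intro: has_field_derivative_at_within\<close>)
        then show "norm (quot i u) \<le> h u"
          using X by (simp add: quot_def divide_le_eq)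
      qed
    qed fact+
    ultimately show "(\<lambda>i. (integral\<^sup>L M (f (X i)) - integral\<^sup>L M (f x)) / (X i - x))
                       \<longlonglongrightarrow> integral\<^sup>L M (f' x)"
      by simp
  qed
  then show ?thesis
    using at_within_open[of x "ball x r"] \<open>0 < r\<close> by (simp add: has_field_derivative_iff)
qed

lemma set_integral_pos_on_Ioi:
  fixes f :: "real \<Rightarrow> real"
  assumes f: "set_integrable lborel {a<..} f" and pos: "\<And>u. a < u \<Longrightarrow> 0 < f u"
  shows "0 < (LBINT u:{a<..}. f u)"
proof -
  have f': "integrable lborel (\<lambda>u. indicator {a<..} u * f u)"
    using f by (simp add: set_integrable_def)
  have nonneg: "AE u in lborel. 0 \<le> indicator {a<..} u * f u"
    using pos by (auto simp: indicator_def less_imp_le)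
  have "(LBINT u:{a<..}. f u) \<noteq> 0"
  proof
    assume "(LBINT u:{a<..}. f u) = 0"
    then have "AE u in lborel. indicator {a<..} u * f u = 0"
      using integral_nonneg_eq_0_iff_AE[OF f' nonneg]
      by (simp add: set_lebesgue_integral_def)
    then have "AE u in lborel. u \<notin> {a<..a + 1}"
      by eventually_elim (use pos in \<open>force simp: indicator_def\<close>)
    then have "emeasure lborel {a<..a + 1} = 0"
      by (subst AE_iff_measurable[symmetric, where P = "\<lambda>u. u \<notin> {a<..a + 1}"]) auto
    then show False by simp
  qed
  moreover have "0 \<le> (LBINT u:{a<..}. f u)"
    using nonneg by (simp add: set_lebesgue_integral_def integral_nonneg_AE)
  ultimately show ?thesis by linarith
qed

lemma powr_times_self: "0 \<le> x \<Longrightarrow> x powr a * x = x powr (a + 1 :: real)"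
  using powr_add[of x a 1] by simp

lemma powr_has_real_derivative_at_0_right:
  fixes r :: real
  assumes "1 \<le> r"
  shows "((\<lambda>x. x powr r) has_real_derivative of_bool (r = 1)) (at 0 within {0..})"
proof (cases "r = 1")
  case True
  have "((\<lambda>x::real. x powr 1) has_real_derivative 1) (at 0 within {0..})"
    by (rule has_field_derivative_transform_within[OF DERIV_ident, where d = 1]) auto
  then show ?thesis
    using True by simp
next
  case False
  then have "1 < r" using assms by simp
  have "((\<lambda>x::real. x powr (r - 1)) \<longlongrightarrow> 0) (at 0 within {0..})"
    by (rule tendsto_zero_powrI[of "\<lambda>x. x" _ "\<lambda>_. r - 1" "r - 1"])
       (use \<open>1 < r\<close> in \<open>auto simp: eventually_at_filter intro: tendsto_ident_at\<close>)
  moreover have "\<forall>\<^sub>F x in at 0 within {0..}. x powr (r - 1) = (x powr r - 0 powr r) / (x - 0)"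
    by (auto simp: eventually_at_filter powr_diff)
  ultimately show ?thesis
    using False by (simp add: has_field_derivative_iff tendsto_cong)
qed

text \<open>The \<open>N' G'\<close> terms cancel, and the Gaussian weight absorbs the first-order term of
  \<open>G'' = x G' + q G\<close>.\<close>
lemma weighted_wronskian_has_real_derivative:
  fixes N N' G G' :: "real \<Rightarrow> real"
  assumes "(N has_real_derivative N' x) (at x)" and "(N' has_real_derivative N'' x) (at x)"
    and "(G has_real_derivative G' x) (at x)"
    and "(G' has_real_derivative x * G' x + q * G x) (at x)"
  shows "((\<lambda>y. exp (- y\<^sup>2 / 2) * (N' y * G y - N y * G' y)) has_real_derivative
           exp (- x\<^sup>2 / 2) * G x * (N'' x - x * N' x - q * N x)) (at x)"
proof -
  have "((\<lambda>y. exp (- y\<^sup>2 / 2)) has_real_derivative exp (- x\<^sup>2 / 2) * (- x)) (at x)"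
    by (auto intro!: derivative_eq_intros)
  moreover have "((\<lambda>y. N' y * G y - N y * G' y) has_real_derivative
      N' x * G' x + N'' x * G x - (N x * (x * G' x + q * G x) + N' x * G' x)) (at x)"
    using assms by (intro DERIV_diff DERIV_mult')
  ultimately show ?thesis
    by (rule DERIV_mult'[THEN DERIV_cong]) (simp add: algebra_simps)
qed

lemma sign_change_past_valley:
  fixes V V' :: "real \<Rightarrow> real" and a D :: real
  assumes "0 < D" "0 \<le> a" "V D = 0"
    and V': "\<And>x. 0 < x \<Longrightarrow> (V has_real_derivative V' x) (at x)"
    and descending: "\<And>x. 0 < x \<Longrightarrow> x < a \<Longrightarrow> V' x < 0"
    and ascending: "\<And>x. a < x \<Longrightarrow> 0 < V' x"
    and start: "0 < a \<Longrightarrow> continuous_on {0..a} V \<and> 0 < V 0"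
  obtains A where "0 \<le> A" "A \<le> a" "A \<le> D" "A = 0 \<longleftrightarrow> a = 0"
    "\<And>x. 0 < x \<Longrightarrow> x < A \<Longrightarrow> 0 < V x"
    "\<And>x. A < x \<Longrightarrow> x < D \<Longrightarrow> V x < 0"
    "0 < A \<Longrightarrow> V A \<le> 0"
proof -
  have increasing: "V x < V y" if "0 < x" "a \<le> x" "x < y" for x y
  proof (rule DERIV_pos_imp_increasing_open[OF \<open>x < y\<close>])
    fix t assume "x < t" "t < y"
    then have "0 < t" "a < t" using that by auto
    then show "\<exists>d. DERIV V t :> d \<and> 0 < d" using V' ascending by blast
  next
    show "continuous_on {x..y} V"
      by (rule DERIV_continuous_on[of _ _ V']) (use V' that in \<open>auto intro: has_field_derivative_at_within\<close>)
  qed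
  have decreasing: "V y < V x" if "0 \<le> x" "x < y" "y \<le> a" for x y
  proof (rule DERIV_neg_imp_decreasing_open[OF \<open>x < y\<close>])
    fix t assume "x < t" "t < y"
    then have "0 < t" "t < a" using that by auto
    then show "\<exists>d. DERIV V t :> d \<and> d < 0" using V' descending by blast
  next
    show "continuous_on {x..y} V"
      using start that by (auto intro: continuous_on_subset)
  qed
  consider "a = 0" | "0 < a" "D \<le> a" | "0 < a" "a < D" using \<open>0 \<le> a\<close> by linarith
  then show thesis
  proof cases
    case 1
    show thesis
      by (rule that[of 0]) (use 1 increasing[of _ D] \<open>V D = 0\<close> \<open>0 < D\<close> in auto)
  next
    case 2
    show thesis
      by (rule that[of D]) (use 2 decreasing[of _ D] \<open>V D = 0\<close> \<open>0 < D\<close> in auto)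
  next
    case 3
    have "V a < 0" using increasing[of a D] 3 \<open>V D = 0\<close> by simp
    moreover have "continuous_on {0..a} V" "0 < V 0" using start 3 by auto
    ultimately obtain A where A: "0 \<le> A" "A \<le> a" "V A = 0"
      using IVT2'[of V a 0 0] 3 by auto
    have "A \<noteq> 0" "A \<noteq> a" using A \<open>V a < 0\<close> \<open>0 < V 0\<close> by auto
    have negative: "V x < 0" if "A < x" "x < D" for x
    proof (cases "x \<le> a")
      case True
      then show ?thesis using decreasing[of A x] A that by simp
    next
      case False
      then show ?thesis using increasing[of x D] \<open>V D = 0\<close> 3 that by simp
    qed
    show thesis
      by (rule that[of A]) (use A 3 \<open>A \<noteq> 0\<close> negative decreasing[of _ A] in auto)
  qed
qed

lemma unique_max_of_unimodal:
  fixes w :: "real \<Rightarrow> real"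
  assumes "a \<le> m" "m \<le> b" "continuous_on {a..b} w"
    and up: "\<And>x. a < x \<Longrightarrow> x < m \<Longrightarrow> \<exists>d. DERIV w x :> d \<and> 0 < d"
    and down: "\<And>x. m < x \<Longrightarrow> x < b \<Longrightarrow> \<exists>d. DERIV w x :> d \<and> d < 0"
    and "x \<in> {a..b}" "x \<noteq> m"
  shows "w x < w m"
proof (cases "x < m")
  case True
  show ?thesis
    by (rule DERIV_pos_imp_increasing_open[OF True])
       (use assms True in \<open>auto intro: continuous_on_subset\<close>)
next
  case False
  show ?thesis
    by (rule DERIV_neg_imp_decreasing_open)
       (use assms False in \<open>auto intro: continuous_on_subset\<close>)
qed

lemma has_real_derivative_nonpos_if_decreasing_right:
  fixes f :: "real \<Rightarrow> real"
  assumes "(f has_real_derivative d) (at a within {a..b})" "a < b"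
    and "\<And>x. a < x \<Longrightarrow> x \<le> b \<Longrightarrow> f x < f a"
  shows "d \<le> 0"
proof (rule ccontr)
  assume "\<not> d \<le> 0"
  then obtain e where "0 < e" and e: "\<And>h. 0 < h \<Longrightarrow> a + h \<in> {a..b} \<Longrightarrow> h < e \<Longrightarrow> f a < f (a + h)"
    using has_real_derivative_pos_inc_right[OF assms(1)] by force
  let ?h = "min (e / 2) (b - a)"
  have "f a < f (a + ?h)" using e[of ?h] \<open>0 < e\<close> \<open>a < b\<close> by auto
  moreover have "f (a + ?h) < f a" using assms(3)[of "a + ?h"] \<open>0 < e\<close> \<open>a < b\<close> by auto
  ultimately show False by simp
qed

section \<open>The integrals \<open>F\<^sub>q\<close> and \<open>G\<^sub>q\<close>\<close>

definition Fq_integrand :: "real \<Rightarrow> real \<Rightarrow> real \<Rightarrow> real" where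
  "Fq_integrand q y u = u powr (q - 1) * exp (y * u - u\<^sup>2 / 2)"

lemma Fq_eq_set_integral: "Fq q y = (LBINT u:{0<..}. Fq_integrand q y u)"
  unfolding Fq_def Fq_integrand_def ..

lemma Fq_integrand_pos: "0 < u \<Longrightarrow> 0 < Fq_integrand q y u"
  by (simp add: Fq_integrand_def)

lemma Fq_integrand_mono:
  assumes "0 < u" "y \<le> y'"
  shows "Fq_integrand q y u \<le> Fq_integrand q y' u"
  using assms unfolding Fq_integrand_def by (intro mult_left_mono) (auto intro: mult_right_mono)

text \<open>Completing the square: \<open>y u - u\<^sup>2/2 \<le> (\<bar>y\<bar> + 1)\<^sup>2/2 - u\<close>.\<close>
lemma Fq_integrand_le_Gamma_density:
  assumes "0 < u"
  shows "Fq_integrand q y u \<le> exp ((\<bar>y\<bar> + 1)\<^sup>2 / 2) * (u powr (q - 1) / exp u)"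
proof -
  have "y * u \<le> \<bar>y\<bar> * u" using assms by (simp add: mult_right_mono)
  moreover have "0 \<le> (u - (\<bar>y\<bar> + 1))\<^sup>2" by simp
  ultimately have "y * u - u\<^sup>2 / 2 \<le> (\<bar>y\<bar> + 1)\<^sup>2 / 2 - u"
    by (simp add: power2_eq_square algebra_simps)
  then have "exp (y * u - u\<^sup>2 / 2) \<le> exp ((\<bar>y\<bar> + 1)\<^sup>2 / 2) / exp u"
    by (simp flip: exp_diff)
  then have "u powr (q - 1) * exp (y * u - u\<^sup>2 / 2) \<le> u powr (q - 1) * (exp ((\<bar>y\<bar> + 1)\<^sup>2 / 2) / exp u)"
    by (rule mult_left_mono) simp
  then show ?thesis
    unfolding Fq_integrand_def by (simp add: field_simps)
qed

lemma Gamma_density_integrable: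
  assumes "0 < q"
  shows "set_integrable lborel {0..} (\<lambda>t. t powr (q - 1) / exp t :: real)"
  unfolding set_integrable_def
proof (rule integrableI_nn_integral_finite)
  show "(\<integral>\<^sup>+ t. ennreal (indicator {0..} t *\<^sub>R (t powr (q - 1) / exp t)) \<partial>lborel) = ennreal (Gamma q)"
    using Gamma_conv_nn_integral_real[OF assms] by simp
qed (auto simp: indicator_def)

lemma Fq_integrand_integrable:
  assumes "0 < q"
  shows "set_integrable lborel {0<..} (Fq_integrand q y)"
  unfolding set_integrable_def
proof (rule Bochner_Integration.integrable_bound)
  show "integrable lborel (\<lambda>t. exp ((\<bar>y\<bar> + 1)\<^sup>2 / 2) * (indicator {0..} t *\<^sub>R (t powr (q - 1) / exp t)))"
    using Gamma_density_integrable[OF assms] unfolding set_integrable_def by (rule integrable_mult_right)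
  show "(\<lambda>u. indicat_real {0<..} u *\<^sub>R Fq_integrand q y u) \<in> borel_measurable lborel"
    unfolding Fq_integrand_def by measurable
  show "AE u in lborel. norm (indicat_real {0<..} u *\<^sub>R Fq_integrand q y u)
          \<le> norm (exp ((\<bar>y\<bar> + 1)\<^sup>2 / 2) * (indicator {0..} u *\<^sub>R (u powr (q - 1) / exp u)))"
    using Fq_integrand_le_Gamma_density[of _ q y] Fq_integrand_pos[of _ q y]
    by (auto simp: indicator_def less_imp_le)
qed

lemma Fq_integrand_has_derivative_param:
  assumes "0 < u"
  shows "((\<lambda>y. Fq_integrand q y u) has_real_derivative Fq_integrand (q + 1) y u) (at y)"
proof -
  have "u powr q = u powr (q - 1) * u"
    using assms by (simp add: powr_times_self)
  then show ?thesis
    unfolding Fq_integrand_def by (auto intro!: derivative_eq_intros)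
qed

lemma Fq_integrand_has_derivative_var:
  assumes "0 < u"
  shows "(Fq_integrand (q + 1) y has_real_derivative
            q * Fq_integrand q y u + y * Fq_integrand (q + 1) y u - Fq_integrand (q + 2) y u) (at u)"
proof -
  have "u powr (q + 1) = u powr q * u" "u powr q = u powr (q - 1) * u"
    using assms by (simp_all add: powr_times_self)
  then show ?thesis
    unfolding Fq_integrand_def using assms
    by (auto intro!: derivative_eq_intros simp: algebra_simps power2_eq_square)
qed

lemma Fq_integrand_tendsto_0_at_top: "(Fq_integrand q y \<longlongrightarrow> 0) at_top"
proof -
  obtain k :: nat where k: "q - 1 \<le> real k" using real_arch_simple by blast
  define C where "C = exp ((\<bar>y\<bar> + 1)\<^sup>2 / 2)"
  have majorant: "((\<lambda>u. C * (u ^ k / exp u)) \<longlongrightarrow> 0) at_top"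
    using tendsto_mult_right_zero[OF tendsto_power_div_exp_0[of k], of C] by simp
  have bounds: "\<forall>\<^sub>F u in at_top. 0 \<le> Fq_integrand q y u \<and> Fq_integrand q y u \<le> C * (u ^ k / exp u)"
    using eventually_ge_at_top[of "1::real"]
  proof eventually_elim
    case (elim u)
    have "u powr (q - 1) \<le> u powr real k" using elim k by (intro powr_mono) auto
    then have "C * (u powr (q - 1) / exp u) \<le> C * (u ^ k / exp u)"
      using elim by (simp add: C_def powr_realpow divide_right_mono)
    then show ?case
      using Fq_integrand_le_Gamma_density[of u q y] Fq_integrand_pos[of u q y] elim
      by (simp add: C_def)
  qed
  show ?thesis
    by (rule tendsto_sandwich[OF _ _ tendsto_const majorant])
       (use bounds in \<open>auto elim: eventually_mono\<close>)
qed

lemma Fq_integrand_tendsto_0_at_right_0: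
  assumes "1 < q"
  shows "(Fq_integrand q y \<longlongrightarrow> 0) (at_right 0)"
proof -
  have "((\<lambda>u::real. u powr (q - 1)) \<longlongrightarrow> 0) (at_right 0)"
    by (rule tendsto_zero_powrI[of "\<lambda>u. u" _ "\<lambda>_. q - 1"])
       (use assms in \<open>auto intro: tendsto_ident_at eventually_at_rightI[of 0 1]\<close>)
  moreover have "((\<lambda>u::real. exp (y * u - u\<^sup>2 / 2)) \<longlongrightarrow> exp (y * 0 - 0\<^sup>2 / 2)) (at_right 0)"
    by (intro tendsto_intros) auto
  ultimately show ?thesis
    unfolding Fq_integrand_def using tendsto_mult by force
qed

lemma Fq_pos: "0 < q \<Longrightarrow> 0 < Fq q y"
  unfolding Fq_eq_set_integral
  by (rule set_integral_pos_on_Ioi) (auto intro: Fq_integrand_integrable Fq_integrand_pos)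

lemma Fq_has_real_derivative:
  assumes "0 < q"
  shows "(Fq q has_real_derivative Fq (q + 1) y) (at y)"
proof -
  let ?f = "\<lambda>y u. indicator {0<..} u * Fq_integrand q y u"
  let ?f' = "\<lambda>y u. indicator {0<..} u * Fq_integrand (q + 1) y u"
  have "((\<lambda>y. integral\<^sup>L lborel (?f y)) has_real_derivative integral\<^sup>L lborel (?f' y)) (at y)"
  proof (rule has_real_derivative_integral_dominated[where r = 1 and h = "?f' (\<bar>y\<bar> + 1)"])
    show "integrable lborel (?f x)" for x
      using Fq_integrand_integrable[OF assms] unfolding set_integrable_def by simp
    show "((\<lambda>x. ?f x u) has_real_derivative ?f' x u) (at x)" for x u
      by (cases "0 < u") (auto intro!: DERIV_cmult Fq_integrand_has_derivative_param)
    show "\<bar>?f' x u\<bar> \<le> ?f' (\<bar>y\<bar> + 1) u" if "x \<in> ball y 1" for x u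
    proof (cases "0 < u")
      case True
      have "x \<le> \<bar>y\<bar> + 1" using that by (auto simp: dist_real_def)
      then show ?thesis
        using True Fq_integrand_pos[OF True, of "q + 1" x] Fq_integrand_mono[OF True, of x]
        by (simp add: indicator_def)
    qed (simp add: indicator_def)
    show "integrable lborel (?f' (\<bar>y\<bar> + 1))"
      using Fq_integrand_integrable[of "q + 1"] assms unfolding set_integrable_def by simp
    show "?f' y \<in> borel_measurable lborel"
      unfolding Fq_integrand_def by measurable
  qed simp
  then show ?thesis
    unfolding Fq_eq_set_integral[abs_def] set_lebesgue_integral_def by simp
qed

text \<open>Integration by parts: \<open>Fq_integrand (q + 1) y\<close> vanishes at both ends of \<open>(0, \<infinity>)\<close>.\<close>
lemma Fq_recurrence:
  assumes "0 < q"
  shows "Fq (q + 2) y = y * Fq (q + 1) y + q * Fq q y"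
proof -
  define p where "p u = q * Fq_integrand q y u + y * Fq_integrand (q + 1) y u - Fq_integrand (q + 2) y u" for u
  have int: "set_integrable lborel {0<..} (Fq_integrand r y)" if "r \<in> {q, q + 1, q + 2}" for r
    using that assms by (auto intro: Fq_integrand_integrable)
  have int_sum: "set_integrable lborel {0<..} (\<lambda>u. q * Fq_integrand q y u + y * Fq_integrand (q + 1) y u)"
    using int by (auto intro: set_integrable_mult_right)
  have Ioi: "einterval 0 \<infinity> = {0<..}"
    by (auto simp: einterval_def zero_ereal_def)
  have "(LBINT u=0..\<infinity>. p u) = 0 - 0"
  proof (rule interval_integral_FTC_integrable[where F = "Fq_integrand (q + 1) y"])
    show "(Fq_integrand (q + 1) y has_vector_derivative p x) (at x)" if "0 < ereal x" for x
      using Fq_integrand_has_derivative_var[of x q y] that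
      by (simp add: p_def has_real_derivative_iff_has_vector_derivative zero_ereal_def)
    show "isCont p x" if "0 < ereal x" for x
      using that unfolding p_def Fq_integrand_def
      by (auto simp: zero_ereal_def intro!: continuous_intros)
    show "set_integrable lborel (einterval 0 \<infinity>) p"
      unfolding p_def Ioi using int_sum int by (auto intro: set_integral_diff)
    show "((Fq_integrand (q + 1) y \<circ> real_of_ereal) \<longlongrightarrow> 0) (at_right 0)"
      unfolding zero_ereal_def ereal_tendsto_simps
      using Fq_integrand_tendsto_0_at_right_0[of "q + 1" y] assms by simp
    show "((Fq_integrand (q + 1) y \<circ> real_of_ereal) \<longlongrightarrow> 0) (at_left \<infinity>)"
      unfolding ereal_tendsto_simps using Fq_integrand_tendsto_0_at_top .
  qed simp
  then have "(LBINT u:{0<..}. p u) = 0"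
    by (simp add: interval_lebesgue_integral_def Ioi)
  moreover have "(LBINT u:{0<..}. p u) = q * Fq q y + y * Fq (q + 1) y - Fq (q + 2) y"
    unfolding p_def Fq_eq_set_integral
    using int int_sum
    by (simp add: set_integral_diff set_integral_add set_integral_mult_right int)
  ultimately show ?thesis by simp
qed

lemma Gq_pos: "0 < q \<Longrightarrow> 0 < Gq q y"
  by (simp add: Gq_def Fq_pos)

lemma Gq_has_real_derivative:
  assumes "0 < q"
  shows "(Gq q has_real_derivative - Gq (q + 1) y) (at y)"
  unfolding Gq_def[abs_def]
  using DERIV_chain2[OF Fq_has_real_derivative[OF assms] DERIV_minus[OF DERIV_ident]] by simp

lemma continuous_on_Fq: "0 < q \<Longrightarrow> continuous_on X (Fq q)"
  by (rule DERIV_continuous_on[OF has_field_derivative_at_within[OF Fq_has_real_derivative]])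

lemma continuous_on_Gq: "0 < q \<Longrightarrow> continuous_on X (Gq q)"
  by (rule DERIV_continuous_on[OF has_field_derivative_at_within[OF Gq_has_real_derivative]])

lemma Gq_recurrence: "0 < q \<Longrightarrow> Gq (q + 2) y = - y * Gq (q + 1) y + q * Gq q y"
  by (simp add: Gq_def Fq_recurrence)

section \<open>The function \<open>w\<close>\<close>

locale Dstar_setting =
  fixes q D :: real
  assumes q_pos: "0 < q" and Dstar: "is_Dstar q D"
begin

definition S :: "real \<Rightarrow> real" where "S y = Fq q y + Gq q y"
definition c :: real where "c = D powr q / S D"

text \<open>\<open>N'\<close> and \<open>N''\<close> are the derivatives of \<open>N\<close> only on \<open>(0, \<infinity>)\<close>: at \<open>0\<close> their power
  terms take the junk value \<open>0 powr _ = 0\<close>.\<close>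
definition N :: "real \<Rightarrow> real" where "N A = c * S A - A powr q"
definition N' :: "real \<Rightarrow> real" where
  "N' A = c * (Fq (q + 1) A - Gq (q + 1) A) - q * A powr (q - 1)"
definition N'' :: "real \<Rightarrow> real" where
  "N'' A = c * (Fq (q + 2) A + Gq (q + 2) A) - q * (q - 1) * A powr (q - 2)"

text \<open>The Wronskian \<open>N' G - N G'\<close> of \<open>N\<close> and \<open>G = Gq q\<close>, whose derivative is \<open>- Gq (q + 1)\<close>.\<close>
definition W :: "real \<Rightarrow> real" where "W A = N' A * Gq q A + N A * Gq (q + 1) A"

lemma D_pos: "0 < D"
  using Dstar by (simp add: is_Dstar_def)

lemma S_pos: "0 < S y"
  using q_pos by (simp add: S_def Fq_pos Gq_pos add_pos_pos)

lemma c_pos: "0 < c"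
  using S_pos D_pos by (simp add: c_def)

lemma wfun_eq: "wfun q D A = N A / Gq q A"
  by (simp add: wfun_def N_def c_def S_def)

lemma S_has_real_derivative: "(S has_real_derivative Fq (q + 1) y - Gq (q + 1) y) (at y)"
  unfolding S_def[abs_def]
  using DERIV_add[OF Fq_has_real_derivative Gq_has_real_derivative] q_pos by simp

lemma N_has_real_derivative:
  assumes "0 < A"
  shows "(N has_real_derivative N' A) (at A)"
  unfolding N_def[abs_def] N'_def
  using assms by (auto intro!: derivative_eq_intros S_has_real_derivative)

lemma N'_has_real_derivative:
  assumes "0 < A"
  shows "(N' has_real_derivative N'' A) (at A)"
proof -
  have "q + 1 + 1 = q + 2" by simp
  then show ?thesis
    unfolding N'_def[abs_def] N''_def using assms q_pos
    by (auto intro!: derivative_eq_intros Fq_has_real_derivative Gq_has_real_derivative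
        simp: algebra_simps)
qed

lemma N_D: "N D = 0"
  using S_pos[of D] by (simp add: N_def c_def)

lemma N'_D: "N' D = 0"
proof -
  have "deriv S D = Fq (q + 1) D - Gq (q + 1) D"
    by (rule DERIV_imp_deriv[OF S_has_real_derivative])
  then have "q - D * (Fq (q + 1) D - Gq (q + 1) D) / S D = 0"
    using Dstar by (simp add: is_Dstar_def S_def[abs_def])
  then have "Fq (q + 1) D - Gq (q + 1) D = q * S D / D"
    using S_pos[of D] D_pos by (simp add: field_simps)
  then have "c * (Fq (q + 1) D - Gq (q + 1) D) = q * (D powr q / D)"
    using S_pos[of D] by (simp add: c_def)
  also have "D powr q / D = D powr (q - 1)"
    using D_pos by (simp add: powr_diff)
  finally show ?thesis by (simp add: N'_def)
qed

text \<open>Both \<open>Fq q\<close> and \<open>Gq q\<close> solve \<open>u'' = y u' + q u\<close>, so only the power \<open>A\<^sup>q\<close> survives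
  this operator.\<close>
lemma hermite_operator_N:
  assumes "0 < A"
  shows "N'' A - A * N' A - q * N A = q * A powr (q - 2) * (2 * A\<^sup>2 - (q - 1))"
proof -
  have "A powr (q - 1) = A powr (q - 2) * A" "A powr q = A powr (q - 2) * A\<^sup>2"
    using assms by (simp_all add: powr_times_self power2_eq_square mult.assoc[symmetric])
  then show ?thesis
    unfolding N''_def N'_def N_def S_def Fq_recurrence[OF q_pos] Gq_recurrence[OF q_pos]
    by (simp add: algebra_simps power2_eq_square)
qed

lemma wfun_has_real_derivative:
  assumes "0 < A"
  shows "(wfun q D has_real_derivative W A / (Gq q A)\<^sup>2) (at A)"
proof -
  have "((\<lambda>A. N A / Gq q A) has_real_derivative
          (N' A * Gq q A - N A * - Gq (q + 1) A) / (Gq q A * Gq q A)) (at A)"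
    using Gq_pos[OF q_pos, of A]
    by (intro DERIV_divide N_has_real_derivative Gq_has_real_derivative assms q_pos) simp
  then show ?thesis
    by (simp add: wfun_eq[abs_def] W_def power2_eq_square)
qed

lemma weighted_W_has_real_derivative:
  assumes "0 < A"
  shows "((\<lambda>A. exp (- A\<^sup>2 / 2) * W A) has_real_derivative
           exp (- A\<^sup>2 / 2) * Gq q A * (q * A powr (q - 2) * (2 * A\<^sup>2 - (q - 1)))) (at A)"
proof -
  have "((\<lambda>y. - Gq (q + 1) y) has_real_derivative A * - Gq (q + 1) A + q * Gq q A) (at A)"
    using DERIV_minus[OF Gq_has_real_derivative[of "q + 1" A]] q_pos
    by (simp add: Gq_recurrence add.assoc)
  from weighted_wronskian_has_real_derivative[where N'' = N'' and G' = "\<lambda>y. - Gq (q + 1) y",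
         OF N_has_real_derivative[OF assms] N'_has_real_derivative[OF assms]
         Gq_has_real_derivative[OF q_pos, of A] this]
  show ?thesis
    by (simp add: W_def hermite_operator_N[OF assms])
qed

lemma W_D: "W D = 0"
  by (simp add: W_def N_D N'_D)

lemma W_0_pos: "0 < W 0"
  using S_pos[of 0] c_pos Gq_pos[of "q + 1" 0] q_pos
  by (simp add: W_def N'_def N_def Gq_def)

lemma continuous_on_N: "continuous_on {0..} N"
  unfolding N_def[abs_def] S_def[abs_def] using q_pos
  by (intro continuous_intros continuous_on_Fq continuous_on_Gq continuous_on_powr') auto

lemma continuous_on_W:
  assumes "1 < q"
  shows "continuous_on {0..} W"
  unfolding W_def[abs_def] N'_def using assms q_pos
  by (intro continuous_intros continuous_on_N continuous_on_Fq continuous_on_Gq continuous_on_powr') auto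

lemma continuous_on_wfun: "continuous_on {0..} (wfun q D)"
  unfolding wfun_eq[abs_def] using Gq_pos[OF q_pos] q_pos
  by (intro continuous_on_divide continuous_on_N continuous_on_Gq) (auto simp: less_imp_neq[symmetric])

lemma W_sign_change:
  obtains As where "0 \<le> As" "As \<le> D" "As \<le> sqrt (max ((q - 1) / 2) 0)" "As = 0 \<longleftrightarrow> q \<le> 1"
    "\<And>x. 0 < x \<Longrightarrow> x < As \<Longrightarrow> 0 < W x"
    "\<And>x. As < x \<Longrightarrow> x < D \<Longrightarrow> W x < 0"
    "0 < As \<Longrightarrow> W As \<le> 0"
proof -
  define a where "a = sqrt (max ((q - 1) / 2) 0)"
  define V where "V A = exp (- A\<^sup>2 / 2) * W A" for A
  have V_sign: "0 < V A \<longleftrightarrow> 0 < W A" "V A < 0 \<longleftrightarrow> W A < 0" "V A \<le> 0 \<longleftrightarrow> W A \<le> 0" for A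
    by (simp_all add: V_def zero_less_mult_iff mult_less_0_iff mult_le_0_iff)
  have a_sq: "a\<^sup>2 = max ((q - 1) / 2) 0" by (simp add: a_def)
  have factor_pos: "0 < exp (- x\<^sup>2 / 2) * Gq q x * (q * x powr (q - 2))" if "0 < x" for x
    using that q_pos Gq_pos[OF q_pos, of x] by simp
  obtain As where As: "0 \<le> As" "As \<le> a" "As \<le> D" "As = 0 \<longleftrightarrow> a = 0"
    "\<And>x. 0 < x \<Longrightarrow> x < As \<Longrightarrow> 0 < V x" "\<And>x. As < x \<Longrightarrow> x < D \<Longrightarrow> V x < 0"
    "0 < As \<Longrightarrow> V As \<le> 0"
  proof (rule sign_change_past_valley[of D a V])
    show "0 < D" by (rule D_pos)
    show "0 \<le> a" by (simp add: a_def)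
    show "V D = 0" by (simp add: V_def W_D)
    show "(V has_real_derivative exp (- x\<^sup>2 / 2) * Gq q x * (q * x powr (q - 2) * (2 * x\<^sup>2 - (q - 1)))) (at x)"
      if "0 < x" for x
      unfolding V_def[abs_def] by (rule weighted_W_has_real_derivative[OF that])
    show "exp (- x\<^sup>2 / 2) * Gq q x * (q * x powr (q - 2) * (2 * x\<^sup>2 - (q - 1))) < 0"
      if "0 < x" "x < a" for x
    proof -
      have "x\<^sup>2 < a\<^sup>2" using that by (intro power_strict_mono) auto
      then have "2 * x\<^sup>2 - (q - 1) < 0" using that a_sq by (auto simp: max_def split: if_splits)
      then show ?thesis using factor_pos[OF \<open>0 < x\<close>] by (simp add: mult_pos_neg mult.assoc[symmetric])
    qed
    show "0 < exp (- x\<^sup>2 / 2) * Gq q x * (q * x powr (q - 2) * (2 * x\<^sup>2 - (q - 1)))"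
      if "a < x" for x
    proof -
      have "0 \<le> a" by (simp add: a_def)
      with that have "0 < x" by linarith
      have "a\<^sup>2 < x\<^sup>2" using that \<open>0 \<le> a\<close> by (intro power_strict_mono) auto
      moreover have "(q - 1) / 2 \<le> a\<^sup>2" using a_sq by simp
      ultimately have "0 < 2 * x\<^sup>2 - (q - 1)" by (simp add: field_simps)
      with \<open>0 < x\<close> show ?thesis using factor_pos by (simp add: mult.assoc[symmetric])
    qed
    show "continuous_on {0..a} V \<and> 0 < V 0" if "0 < a"
    proof
      have "1 < q" using that by (auto simp: a_def max_def split: if_splits)
      then show "continuous_on {0..a} V"
        unfolding V_def[abs_def] using continuous_on_W
        by (auto intro!: continuous_intros intro: continuous_on_subset)
      show "0 < V 0" using W_0_pos by (simp add: V_def)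
    qed
  qed blast
  have "a = 0 \<longleftrightarrow> q \<le> 1" by (auto simp: a_def max_def)
  then show thesis
    using As V_sign by (intro that[of As]) (auto simp: a_def)
qed

text \<open>For \<open>q = 1\<close> the power term contributes \<open>1\<close>, which \<open>N' 0\<close> misses since \<open>0 powr 0 = 0\<close>.\<close>
lemma N_has_real_derivative_at_0:
  assumes "1 \<le> q"
  shows "(N has_real_derivative N' 0 - of_bool (q = 1)) (at 0 within {0..})"
proof -
  have "(N has_real_derivative c * (Fq (q + 1) 0 - Gq (q + 1) 0) - of_bool (q = 1))
          (at 0 within {0..})"
    unfolding N_def[abs_def]
    by (intro DERIV_diff DERIV_cmult has_field_derivative_at_within[OF S_has_real_derivative]
        powr_has_real_derivative_at_0_right assms)
  then show ?thesis by (simp add: N'_def)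
qed

lemma wfun_has_real_derivative_at_0:
  assumes "1 \<le> q"
  shows "(wfun q D has_real_derivative (W 0 - of_bool (q = 1) * Gq q 0) / (Gq q 0)\<^sup>2)
           (at 0 within {0..})"
proof -
  have "((\<lambda>A. N A / Gq q A) has_real_derivative
          ((N' 0 - of_bool (q = 1)) * Gq q 0 - N 0 * - Gq (q + 1) 0) / (Gq q 0 * Gq q 0))
          (at 0 within {0..})"
    using Gq_pos[OF q_pos, of 0]
    by (intro DERIV_divide N_has_real_derivative_at_0 assms
        has_field_derivative_at_within[OF Gq_has_real_derivative[OF q_pos]]) simp
  then show ?thesis
    by (simp add: wfun_eq[abs_def] W_def power2_eq_square algebra_simps)
qed

context
  fixes As :: real
  assumes As_range: "0 \<le> As" "As \<le> D"
    and W_pos_before: "\<And>x. 0 < x \<Longrightarrow> x < As \<Longrightarrow> 0 < W x"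
    and W_neg_after: "\<And>x. As < x \<Longrightarrow> x < D \<Longrightarrow> W x < 0"
    and W_As: "0 < As \<Longrightarrow> W As \<le> 0"
    and As_eq_0: "As = 0 \<longleftrightarrow> q \<le> 1"
begin

lemma wfun_less_at_As:
  assumes "B \<in> {0..D}" "B \<noteq> As"
  shows "wfun q D B < wfun q D As"
proof (rule unique_max_of_unimodal[OF As_range _ _ _ assms])
  show "continuous_on {0..D} (wfun q D)"
    using continuous_on_wfun by (rule continuous_on_subset) auto
  show "\<exists>d. DERIV (wfun q D) x :> d \<and> 0 < d" if "0 < x" "x < As" for x
    using wfun_has_real_derivative[OF \<open>0 < x\<close>] W_pos_before[OF that] Gq_pos[OF q_pos, of x]
    by (auto intro: divide_pos_pos)
  show "\<exists>d. DERIV (wfun q D) x :> d \<and> d < 0" if "As < x" "x < D" for x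
  proof -
    have "0 < x" using that As_range by linarith
    moreover have "W x / (Gq q x)\<^sup>2 < 0"
      using W_neg_after[OF that] Gq_pos[OF q_pos, of x] by (simp add: divide_neg_pos)
    ultimately show ?thesis using wfun_has_real_derivative by blast
  qed
qed

lemma wfun_unique_max_at_As:
  "\<forall>B\<in>{0..D}. wfun q D B \<le> wfun q D As"
  "\<exists>!A. A \<in> {0..D} \<and> (\<forall>B\<in>{0..D}. wfun q D B \<le> wfun q D A)"
proof -
  show max: "\<forall>B\<in>{0..D}. wfun q D B \<le> wfun q D As"
    using wfun_less_at_As by force
  show "\<exists>!A. A \<in> {0..D} \<and> (\<forall>B\<in>{0..D}. wfun q D B \<le> wfun q D A)"
  proof (rule ex1I[of _ As])
    show "As \<in> {0..D} \<and> (\<forall>B\<in>{0..D}. wfun q D B \<le> wfun q D As)"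
      using max As_range by simp
    show "A = As" if "A \<in> {0..D} \<and> (\<forall>B\<in>{0..D}. wfun q D B \<le> wfun q D A)" for A
      using that wfun_less_at_As[of A] As_range by force
  qed
qed

lemma wfun_derivative_nonpos_iff:
  assumes A: "A \<in> {0..D}" and d: "(wfun q D has_real_derivative d) (at A within {0..D})"
  shows "d \<le> 0 \<longleftrightarrow> As \<le> A"
proof -
  have nontrivial: "at A within {0..D} \<noteq> bot"
    using A D_pos by (simp add: trivial_limit_within)
  consider "0 < A" | "A = 0" "q \<le> 1" | "A = 0" "1 < q" using A by force
  then show ?thesis
  proof cases
    case 1
    have "d = W A / (Gq q A)\<^sup>2"
      using has_field_derivative_unique[OF d
          has_field_derivative_at_within[OF wfun_has_real_derivative[OF 1]] nontrivial] .
    then have "d \<le> 0 \<longleftrightarrow> W A \<le> 0"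
      using Gq_pos[OF q_pos, of A] by (simp add: divide_le_0_iff)
    moreover have "W A \<le> 0 \<longleftrightarrow> As \<le> A"
      using W_pos_before[of A] W_neg_after[of A] W_As W_D 1 A by (cases "A < As") force+
    ultimately show ?thesis by simp
  next
    case 2
    have "d \<le> 0"
      using d 2 D_pos wfun_less_at_As As_eq_0
      by (intro has_real_derivative_nonpos_if_decreasing_right) auto
    then show ?thesis using 2 As_eq_0 by simp
  next
    case 3
    have "(wfun q D has_real_derivative W 0 / (Gq q 0)\<^sup>2) (at 0 within {0..D})"
      using wfun_has_real_derivative_at_0 3 by (auto intro: DERIV_subset)
    then have "d = W 0 / (Gq q 0)\<^sup>2"
      using has_field_derivative_unique[OF d] nontrivial 3 by simp
    moreover have "0 < W 0 / (Gq q 0)\<^sup>2"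
      using W_0_pos Gq_pos[OF q_pos, of 0] by simp
    ultimately show ?thesis
      using 3 As_eq_0 As_range by auto
  qed
qed

end

end

theorem lemma5p2:
  fixes q D :: real
  assumes "q > 0" and "is_Dstar q D"
  shows "\<exists>Astar.
     (\<exists>!A. A \<in> {0..D} \<and> (\<forall>B\<in>{0..D}. wfun q D B \<le> wfun q D A))
   \<and> Astar \<in> {0..D} \<and> (\<forall>B\<in>{0..D}. wfun q D B \<le> wfun q D Astar)
   \<and> Astar \<le> sqrt (max ((q - 1) / 2) 0)
   \<and> (\<forall>A\<in>{0<..D}. wfun q D differentiable (at A))
   \<and> (1 \<le> q \<longrightarrow> wfun q D differentiable (at 0 within {0..D}))
   \<and> (\<forall>A\<in>{0..D}. \<forall>d. (wfun q D has_real_derivative d) (at A within {0..D}) \<longrightarrow>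
          (d \<le> 0 \<longleftrightarrow> Astar \<le> A))
   \<and> (Astar = 0 \<longleftrightarrow> q \<le> 1)"
proof -
  interpret Dstar_setting q D
    using assms by unfold_locales
  obtain As where As: "0 \<le> As" "As \<le> D" "As \<le> sqrt (max ((q - 1) / 2) 0)" "As = 0 \<longleftrightarrow> q \<le> 1"
    "\<And>x. 0 < x \<Longrightarrow> x < As \<Longrightarrow> 0 < W x" "\<And>x. As < x \<Longrightarrow> x < D \<Longrightarrow> W x < 0"
    "0 < As \<Longrightarrow> W As \<le> 0"
    using W_sign_change by blast
  have "\<forall>A\<in>{0<..D}. wfun q D differentiable (at A)"
    using wfun_has_real_derivative unfolding real_differentiable_def by force
  moreover have "1 \<le> q \<longrightarrow> wfun q D differentiable (at 0 within {0..D})"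
    using wfun_has_real_derivative_at_0[THEN DERIV_subset, of "{0..D}"]
    unfolding real_differentiable_def by auto
  moreover note wfun_unique_max_at_As[OF As(1,2,5,6,7,4)]
    and wfun_derivative_nonpos_iff[OF As(1,2,5,6,7,4)]
  ultimately show ?thesis
    using As(1-4) by (intro exI[of _ As]) auto
qed

end
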